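(* If $\Delta\subseteq\mathbb{R}^d$ is a Delzant polytope, then $\Upsilon(\Delta)=\mathrm{width}(\Delta)$.
   Context: A Delzant polytope is a full-dimensional polytope $\Delta\subseteq\mathbb{R}^d$ (vertices need not be lattice points) whose normal fan consists of unimodular cones, i.e. at each vertex the primitive inner normals of the $d$ incident facets form a basis of $(\mathbb{Z}^d)^*$. Write the facets as $\{x\in\Delta:\langle u_k,x\rangle=-\phi_k\}$, $k=1,\dots,m$, with $u_k\in(\mathbb{Z}^d)^*$ primitive inner facet normals and $\phi_k\in\mathbb{R}$, so $\Delta=\{x:\langle u_k,x\rangle\ge-\phi_k\ \forall k\}$. $\Upsilon(\Delta)$ is the minimum of all positive values $\sum_{k=1}^m a_k\phi_k$ where $a_k$ are nonnegative integers with $\sum_{k=1}^m a_ku_k=0$. $\mathrm{width}(\Delta)=\min_{u\in(\mathbb{Z}^d)^*\setminus\{0\}}\max_{x,y\in\Delta}|u(x)-u(y)|$. *)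

theory Defs
  imports "HOL-Analysis.Analysis"
begin

text \<open>Vectors in R^d are \<open>real^'n\<close>; the dual lattice (Z^d)^* is identified with the
integer vectors of \<open>real^'n\<close>, paired with R^d via the standard inner product.\<close>

definition integral_vec :: "real^'n \<Rightarrow> bool" where
  "integral_vec u \<longleftrightarrow> (\<forall>i. u $ i \<in> \<int>)"

definition primitive_vec :: "real^'n \<Rightarrow> bool" where
  "primitive_vec u \<longleftrightarrow> integral_vec u \<and> u \<noteq> 0 \<and>
     (\<forall>(c::int) w. integral_vec w \<and> u = of_int c *\<^sub>R w \<longrightarrow> \<bar>c\<bar> = 1)"

definition lattice_basis :: "(nat \<Rightarrow> real^'n) \<Rightarrow> nat set \<Rightarrow> bool" where
  "lattice_basis u I \<longleftrightarrow> finite I \<and> card I = CARD('n) \<and> inj_on u I \<and>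
     (\<forall>k\<in>I. integral_vec (u k)) \<and> independent (u ` I) \<and>
     (\<forall>z. integral_vec z \<longrightarrow> (\<exists>c::nat \<Rightarrow> int. z = (\<Sum>k\<in>I. of_int (c k) *\<^sub>R u k)))"

definition facet_presentation ::
  "(real^'n) set \<Rightarrow> nat \<Rightarrow> (nat \<Rightarrow> real^'n) \<Rightarrow> (nat \<Rightarrow> real) \<Rightarrow> bool" where
  "facet_presentation \<Delta> m u \<phi> \<longleftrightarrow>
     (\<forall>k<m. primitive_vec (u k)) \<and>
     \<Delta> = {x. \<forall>k<m. inner (u k) x \<ge> - \<phi> k} \<and>
     (\<forall>k<m. {x\<in>\<Delta>. inner (u k) x = - \<phi> k} facet_of \<Delta>) \<and>
     inj_on (\<lambda>k. {x\<in>\<Delta>. inner (u k) x = - \<phi> k}) {..<m} \<and>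
     (\<forall>F. F facet_of \<Delta> \<longrightarrow> (\<exists>k<m. F = {x\<in>\<Delta>. inner (u k) x = - \<phi> k}))"

definition delzant_polytope :: "(real^'n) set \<Rightarrow> bool" where
  "delzant_polytope \<Delta> \<longleftrightarrow> polytope \<Delta> \<and> interior \<Delta> \<noteq> {} \<and>
     (\<exists>m u \<phi>. facet_presentation \<Delta> m u \<phi> \<and>
        (\<forall>v. v extreme_point_of \<Delta> \<longrightarrow>
              lattice_basis u {k. k < m \<and> inner (u k) v = - \<phi> k}))"

definition Upsilon :: "nat \<Rightarrow> (nat \<Rightarrow> real^'n) \<Rightarrow> (nat \<Rightarrow> real) \<Rightarrow> real" where
  "Upsilon m u \<phi> = Inf {s. s > 0 \<and> (\<exists>a::nat \<Rightarrow> nat.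
      (\<Sum>k<m. of_nat (a k) *\<^sub>R u k) = 0 \<and> s = (\<Sum>k<m. of_nat (a k) * \<phi> k))}"

definition lattice_width :: "(real^'n) set \<Rightarrow> real" where
  "lattice_width \<Delta> = Inf ((\<lambda>u. Sup {\<bar>inner u x - inner u y\<bar> | x y. x \<in> \<Delta> \<and> y \<in> \<Delta>})
      ` {u. integral_vec u \<and> u \<noteq> 0})"

end

theory Submission imports Defs begin

text \<open>For an integral \<open>w \<noteq> 0\<close> let \<open>v\<close> and \<open>v'\<close> be vertices of \<open>\<Delta>\<close> at which \<open>w\<close> is minimal and
  maximal. The normals of the facets through \<open>v\<close> form a lattice basis, and the coordinates of \<open>w\<close>
  in it are nonnegative: moving from \<open>v\<close> along the edge on which only the \<open>j\<close>-th of these facet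
  inequalities becomes strict does not decrease \<open>w\<close>. Hence \<open>w = \<Sum> a\<^sub>k u\<^sub>k\<close> and, likewise,
  \<open>-w = \<Sum> b\<^sub>k u\<^sub>k\<close> with \<open>a, b \<in> \<nat>\<close>, and \<open>\<Sum> (a\<^sub>k + b\<^sub>k) \<phi>\<^sub>k = \<langle>w, v'\<rangle> - \<langle>w, v\<rangle>\<close> is the width of
  \<open>\<Delta>\<close> along \<open>w\<close>; so every such width is a value admitted in \<open>\<Upsilon>\<close>. Conversely, if
  \<open>\<Sum> a\<^sub>k u\<^sub>k = 0\<close> and \<open>s = \<Sum> a\<^sub>k \<phi>\<^sub>k > 0\<close>, then \<open>s = \<Sum> a\<^sub>k (\<langle>u\<^sub>k, x\<rangle> + \<phi>\<^sub>k)\<close> for every \<open>x \<in> \<Delta>\<close>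
  with nonnegative summands, so the width along any \<open>u\<^sub>k\<close> with \<open>a\<^sub>k > 0\<close> is at most \<open>s\<close>.\<close>

lemma cInf_eq_coinitial_subset:
  fixes S W :: "'a::conditionally_complete_linorder set"
  assumes "W \<noteq> {}" "W \<subseteq> S" "bdd_below S" "\<And>s. s \<in> S \<Longrightarrow> \<exists>w\<in>W. w \<le> s"
  shows "Inf W = Inf S"
proof (rule antisym)
  have "bdd_below W" using bdd_below_mono[OF assms(3,2)] .
  show "Inf W \<le> Inf S"
  proof (rule cInf_greatest)
    show "S \<noteq> {}" using assms(1,2) by blast
    fix s assume "s \<in> S"
    then obtain w where "w \<in> W" "w \<le> s" using assms(4) by blast
    then show "Inf W \<le> s" using \<open>bdd_below W\<close> by (meson cInf_lower order_trans)
  qed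
  show "Inf S \<le> Inf W" using cInf_superset_mono[OF assms(1,3,2)] .
qed

lemma integral_vecE:
  fixes a :: "real^'n"
  assumes "integral_vec a"
  obtains A :: "'n \<Rightarrow> int" where "\<And>j. a $ j = of_int (A j)"
proof -
  have "\<forall>j. \<exists>z::int. a $ j = of_int z" using assms unfolding integral_vec_def by (metis Ints_cases)
  then show ?thesis using that by metis
qed

lemma primitive_vec_positive_multiple:
  fixes a b :: "real^'n"
  assumes pa: "primitive_vec a" and pb: "primitive_vec b" and ba: "b = l *\<^sub>R a" and l: "l > 0"
  shows "l = 1"
proof -
  have ia: "integral_vec a" and ib: "integral_vec b" and a0: "a \<noteq> 0"
    using pa pb unfolding primitive_vec_def by auto
  obtain A where A: "\<And>j. a $ j = of_int (A j)" using integral_vecE[OF ia] by blast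
  obtain B where B: "\<And>j. b $ j = of_int (B j)" using integral_vecE[OF ib] by blast
  obtain i where ai: "a $ i \<noteq> 0" using a0 by (metis vec_eq_iff zero_index)
  have "l = b $ i / a $ i" using ba ai by simp
  then have "l \<in> \<rat>" using A B by simp
  then obtain P Q :: int where Q: "Q > 0" and cop: "coprime P Q" and lPQ: "l = of_int P / of_int Q"
    by (metis Rats_cases')
  have P: "P > 0" using l Q lPQ by (simp add: zero_less_divide_iff)
  \<comment> \<open>In lowest terms \<open>l = P / Q\<close>, so \<open>Q\<close> divides every coordinate of \<open>a\<close> and \<open>P\<close> every one of \<open>b\<close>.\<close>
  have eq: "Q * B j = P * A j" for j
  proof -
    have "real_of_int Q * b $ j = of_int P * a $ j" using ba lPQ Q by (simp add: field_simps)
    then show ?thesis using A B by (metis of_int_eq_iff of_int_mult)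
  qed
  have dQ: "Q dvd A j" and dP: "P dvd B j" for j
    using eq[of j] cop
    by (metis coprime_commute coprime_dvd_mult_right_iff dvd_triv_left)+
  define wa where "wa = (\<chi> j. real_of_int (A j div Q))"
  define wb where "wb = (\<chi> j. real_of_int (B j div P))"
  have "integral_vec wa" "integral_vec wb" unfolding integral_vec_def wa_def wb_def by auto
  moreover have "a = of_int Q *\<^sub>R wa"
    unfolding wa_def using A dQ by (simp add: vec_eq_iff) (metis dvd_mult_div_cancel of_int_mult)
  moreover have "b = of_int P *\<^sub>R wb"
    unfolding wb_def using B dP by (simp add: vec_eq_iff) (metis dvd_mult_div_cancel of_int_mult)
  ultimately have "\<bar>Q\<bar> = 1" "\<bar>P\<bar> = 1" using pa pb unfolding primitive_vec_def by blast+
  then show ?thesis using lPQ P Q by simp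
qed

lemma inner_gt_in_interior:
  fixes a z :: "'a::real_inner"
  assumes z: "z \<in> interior D" and D: "\<forall>x\<in>D. inner a x \<ge> p" and a: "a \<noteq> 0"
  shows "inner a z > p"
proof -
  obtain e where e: "e > 0" "ball z e \<subseteq> D" using z by (meson mem_interior)
  define t where "t = e / (2 * norm a)"
  have t: "t > 0" using e a by (simp add: t_def)
  have "dist z (z - t *\<^sub>R a) = t * norm a" using t by (simp add: dist_norm)
  also have "\<dots> < e" using e a by (simp add: t_def)
  finally have "z - t *\<^sub>R a \<in> D" using e by auto
  then have "inner a (z - t *\<^sub>R a) \<ge> p" using D by blast
  moreover have "inner a (z - t *\<^sub>R a) = inner a z - t * (norm a)\<^sup>2"
    by (simp add: inner_diff_right power2_norm_eq_inner)
  moreover have "t * (norm a)\<^sup>2 > 0" using t a by simp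
  ultimately show ?thesis by linarith
qed

lemma facet_normals_proportional:
  fixes D :: "'a::euclidean_space set"
  assumes int: "interior D \<noteq> {}" and a0: "a \<noteq> 0" and b0: "b \<noteq> 0"
    and ha: "\<forall>x\<in>D. inner a x \<ge> p" and hb: "\<forall>x\<in>D. inner b x \<ge> q"
    and facet: "{x\<in>D. inner a x = p} facet_of D"
    and eq: "{x\<in>D. inner a x = p} = {x\<in>D. inner b x = q}"
  obtains l where "l > 0" "b = l *\<^sub>R a" "q = l * p"
proof -
  define F where "F = {x\<in>D. inner a x = p}"
  have "aff_dim D = DIM('a)"
    using affine_hull_nonempty_interior[OF int] by (metis aff_dim_UNIV aff_dim_affine_hull)
  then have Fne: "F \<noteq> {}" and affF: "aff_dim F = int DIM('a) - 1"
    using facet unfolding F_def facet_of_def by auto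
  have hyperplane: "affine hull F = {x. inner c x = r}" if "c \<noteq> 0" "F \<subseteq> {x. inner c x = r}" for c r
  proof (rule affine_dim_equal)
    show "affine hull F \<subseteq> {x. inner c x = r}" using that(2) by (simp add: affine_hyperplane hull_minimal)
    show "aff_dim (affine hull F) = aff_dim {x. inner c x = r}" using that(1) affF by simp
  qed (use Fne in \<open>auto simp: affine_hyperplane\<close>)
  have Ha: "affine hull F = {x. inner a x = p}" by (rule hyperplane[OF a0]) (auto simp: F_def)
  have Hb: "affine hull F = {x. inner b x = q}" by (rule hyperplane[OF b0]) (auto simp: F_def eq)
  obtain x0 where x0: "x0 \<in> F" using Fne by blast
  have xa: "inner a x0 = p" and xb: "inner b x0 = q" using x0 eq unfolding F_def by auto
  have orth: "inner b y = 0" if "inner a y = 0" for y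
  proof -
    have "x0 + y \<in> {x. inner a x = p}" using xa that by (simp add: inner_add_right)
    then have "inner b (x0 + y) = q" using Ha Hb by auto
    then show ?thesis using xb by (simp add: inner_add_right)
  qed
  define l where "l = inner b a / inner a a"
  define r where "r = b - l *\<^sub>R a"
  have ar: "inner a r = 0" unfolding r_def l_def using a0 by (simp add: inner_diff_right inner_commute)
  then have "inner r r = 0" using orth[OF ar] unfolding r_def by (simp add: inner_diff_left)
  then have bl: "b = l *\<^sub>R a" unfolding r_def by simp
  have ql: "q = l * p" using xa xb bl by simp
  obtain z where z: "z \<in> interior D" using int by blast
  have "inner a z > p" "inner b z > q" using inner_gt_in_interior[OF z] ha hb a0 b0 by auto
  then have "l * (inner a z - p) > 0" "inner a z - p > 0" using bl ql by (simp_all add: algebra_simps)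
  then have "l > 0" by (simp add: zero_less_mult_iff)
  with bl ql that show ?thesis by blast
qed

lemma facet_presentationD:
  assumes "facet_presentation D m u \<phi>"
  shows facet_presentation_eq: "D = {x. \<forall>k<m. inner (u k) x \<ge> - \<phi> k}"
    and facet_presentation_primitive: "\<And>k. k < m \<Longrightarrow> primitive_vec (u k)"
    and facet_presentation_facet: "\<And>k. k < m \<Longrightarrow> {x\<in>D. inner (u k) x = - \<phi> k} facet_of D"
    and facet_presentation_complete:
      "\<And>F. F facet_of D \<Longrightarrow> \<exists>k<m. F = {x\<in>D. inner (u k) x = - \<phi> k}"
  using assms unfolding facet_presentation_def by blast+

lemma facet_presentations_match:
  assumes int: "interior D \<noteq> {}"
    and fp: "facet_presentation D m u \<phi>" and fp': "facet_presentation D m' u' \<phi>'" and k: "k < m'"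
  shows "\<exists>j<m. u j = u' k \<and> \<phi> j = \<phi>' k"
proof -
  have Fk: "{x\<in>D. inner (u' k) x = - \<phi>' k} facet_of D" using facet_presentation_facet[OF fp' k] .
  then obtain j where j: "j < m" "{x\<in>D. inner (u' k) x = - \<phi>' k} = {x\<in>D. inner (u j) x = - \<phi> j}"
    using facet_presentation_complete[OF fp] by blast
  have pk: "primitive_vec (u' k)" and pj: "primitive_vec (u j)"
    using facet_presentation_primitive fp fp' j(1) k by blast+
  then have "u' k \<noteq> 0" "u j \<noteq> 0" unfolding primitive_vec_def by auto
  moreover have "\<forall>x\<in>D. inner (u' k) x \<ge> - \<phi>' k" "\<forall>x\<in>D. inner (u j) x \<ge> - \<phi> j"
    using facet_presentation_eq[OF fp] facet_presentation_eq[OF fp'] k j(1) by auto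
  ultimately obtain l where "l > 0" "u j = l *\<^sub>R u' k" "- \<phi> j = l * - \<phi>' k"
    using facet_normals_proportional[OF int _ _ _ _ Fk j(2)] by metis
  moreover from this have "l = 1" using primitive_vec_positive_multiple[OF pk pj] by blast
  ultimately show ?thesis using j(1) by auto
qed

lemma lattice_basis_span:
  fixes u :: "nat \<Rightarrow> real^'n"
  assumes "lattice_basis u I"
  shows "span (u ` I) = UNIV"
proof -
  have "finite I" "card I = CARD('n)" "inj_on u I" "independent (u ` I)"
    using assms unfolding lattice_basis_def by auto
  then have "UNIV \<subseteq> span (u ` I)"
    by (intro card_ge_dim_independent) (auto simp: card_image)
  then show ?thesis by blast
qed

lemma spanning_family_dual_direction:
  fixes u :: "nat \<Rightarrow> 'a::euclidean_space"
  assumes fin: "finite I" and card: "card I \<le> DIM('a)" and span: "span (u ` I) = UNIV" and j: "j \<in> I"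
  obtains e where "inner (u j) e > 0" "\<And>k. k \<in> I \<Longrightarrow> k \<noteq> j \<Longrightarrow> inner (u k) e = 0"
proof -
  have "dim (u ` (I - {j})) \<le> card (u ` (I - {j}))" using fin by (simp add: dim_le_card')
  also have "\<dots> \<le> card (I - {j})" using fin card_image_le by blast
  also have "\<dots> < DIM('a)" using card card_Diff1_less[OF fin j] by linarith
  finally obtain e where e0: "e \<noteq> 0" and eo: "\<And>y. y \<in> span (u ` (I - {j})) \<Longrightarrow> orthogonal e y"
    using orthogonal_to_subspace_exists[of "u ` (I - {j})"] by blast
  have others: "inner (u k) e = 0" if "k \<in> I" "k \<noteq> j" for k
    using eo[of "u k"] that by (simp add: span_base orthogonal_def inner_commute)
  have uje: "inner (u j) e \<noteq> 0"
  proof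
    assume "inner (u j) e = 0"
    then have orth: "orthogonal e y" if "y \<in> u ` I" for y
      using that others by (auto simp: orthogonal_def inner_commute)
    have "e \<in> span (u ` I)" using span by simp
    then have "orthogonal e e" using orth by (rule orthogonal_to_span)
    then show False using e0 by (simp add: orthogonal_def)
  qed
  show ?thesis
  proof (cases "inner (u j) e > 0")
    case True
    then show ?thesis using that others by blast
  next
    case False
    then show ?thesis using that[of "- e"] others uje by auto
  qed
qed

lemma polyhedron_feasible_direction:
  fixes u :: "nat \<Rightarrow> 'a::real_inner"
  assumes v: "\<forall>k<m. inner (u k) v \<ge> - \<phi> k"
    and e: "\<And>k. k < m \<Longrightarrow> inner (u k) v = - \<phi> k \<Longrightarrow> inner (u k) e \<ge> 0"
  obtains t where "t > 0" "\<forall>k<m. inner (u k) (v + t *\<^sub>R e) \<ge> - \<phi> k"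
proof -
  have "\<forall>\<^sub>F t in at_right 0. \<forall>k\<in>{..<m}. inner (u k) v + t * inner (u k) e \<ge> - \<phi> k"
  proof (intro eventually_ball_finite ballI)
    fix k assume "k \<in> {..<m}"
    show "\<forall>\<^sub>F t in at_right 0. inner (u k) v + t * inner (u k) e \<ge> - \<phi> k"
    proof (cases "inner (u k) v = - \<phi> k")
      case True
      with e \<open>k \<in> {..<m}\<close> show ?thesis
        by (auto intro: eventually_mono[OF eventually_at_right_less])
    next
      case False
      then have "inner (u k) v > - \<phi> k" using v \<open>k \<in> {..<m}\<close> by force
      moreover have "((\<lambda>t. inner (u k) v + t * inner (u k) e) \<longlongrightarrow> inner (u k) v) (at_right 0)"
        by (auto intro!: tendsto_eq_intros)
      ultimately have "\<forall>\<^sub>F t in at_right 0. - \<phi> k < inner (u k) v + t * inner (u k) e"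
        by (intro order_tendstoD(1))
      then show ?thesis by eventually_elim simp
    qed
  qed simp
  then have "\<forall>\<^sub>F t in at_right (0::real). t > 0 \<and> (\<forall>k<m. inner (u k) (v + t *\<^sub>R e) \<ge> - \<phi> k)"
    using eventually_at_right_less by eventually_elim (auto simp: inner_add_right)
  then show ?thesis using that eventually_happens' trivial_limit_at_right_real by blast
qed

lemma minimizer_cone_coeff_nonneg:
  fixes u :: "nat \<Rightarrow> 'a::euclidean_space" and c :: "nat \<Rightarrow> real"
  assumes v: "\<forall>k<m. inner (u k) v \<ge> - \<phi> k"
    and I: "I = {k. k < m \<and> inner (u k) v = - \<phi> k}"
    and span: "span (u ` I) = UNIV" and card: "card I \<le> DIM('a)"
    and min: "\<And>x. \<forall>k<m. inner (u k) x \<ge> - \<phi> k \<Longrightarrow> inner w v \<le> inner w x"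
    and w: "w = (\<Sum>k\<in>I. c k *\<^sub>R u k)" and j: "j \<in> I"
  shows "c j \<ge> 0"
proof -
  have fin: "finite I" using I by simp
  obtain e where ej: "inner (u j) e > 0" and ek: "\<And>k. k \<in> I \<Longrightarrow> k \<noteq> j \<Longrightarrow> inner (u k) e = 0"
    using spanning_family_dual_direction[OF fin card span j] by blast
  have "inner (u k) e \<ge> 0" if "k \<in> I" for k
    using ej ek[OF that] by (cases "k = j") auto
  then obtain t where t: "t > 0" and feasible: "\<forall>k<m. inner (u k) (v + t *\<^sub>R e) \<ge> - \<phi> k"
    using polyhedron_feasible_direction[OF v] I by blast
  have "inner w v \<le> inner w (v + t *\<^sub>R e)" using min feasible by blast
  then have "inner w e \<ge> 0" using t by (simp add: inner_add_right zero_le_mult_iff)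
  also have "inner w e = (\<Sum>k\<in>I. c k * inner (u k) e)" using w by (simp add: inner_sum_left)
  also have "\<dots> = c j * inner (u j) e" using fin j ek by (subst sum.remove[of I j]) auto
  finally show ?thesis using ej by (simp add: zero_le_mult_iff)
qed

lemma sum_group_scaleR_nat:
  fixes c :: "nat \<Rightarrow> int" and f :: "nat \<Rightarrow> 'a::real_vector"
  assumes "finite I" "\<sigma> ` I \<subseteq> {..<m}" "\<And>k. k \<in> I \<Longrightarrow> c k \<ge> 0"
  shows "(\<Sum>j<m. of_nat (nat (\<Sum>k\<in>{k\<in>I. \<sigma> k = j}. c k)) *\<^sub>R f j) = (\<Sum>k\<in>I. of_int (c k) *\<^sub>R f (\<sigma> k))"
proof -
  have "of_nat (nat (\<Sum>k\<in>{k\<in>I. \<sigma> k = j}. c k)) *\<^sub>R f j = (\<Sum>k\<in>{k\<in>I. \<sigma> k = j}. of_int (c k) *\<^sub>R f (\<sigma> k))"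
    for j
  proof -
    have "(\<Sum>k\<in>{k\<in>I. \<sigma> k = j}. c k) \<ge> 0" using assms(3) by (auto intro: sum_nonneg)
    then have "of_nat (nat (\<Sum>k\<in>{k\<in>I. \<sigma> k = j}. c k)) *\<^sub>R f j = (\<Sum>k\<in>{k\<in>I. \<sigma> k = j}. of_int (c k) *\<^sub>R f j)"
      by (simp add: scaleR_sum_left)
    also have "\<dots> = (\<Sum>k\<in>{k\<in>I. \<sigma> k = j}. of_int (c k) *\<^sub>R f (\<sigma> k))" by (rule sum.cong) auto
    finally show ?thesis .
  qed
  then have "(\<Sum>j<m. of_nat (nat (\<Sum>k\<in>{k\<in>I. \<sigma> k = j}. c k)) *\<^sub>R f j)
      = (\<Sum>j<m. \<Sum>k\<in>{k\<in>I. \<sigma> k = j}. of_int (c k) *\<^sub>R f (\<sigma> k))" by (intro sum.cong refl)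
  also have "\<dots> = (\<Sum>k\<in>I. of_int (c k) *\<^sub>R f (\<sigma> k))" by (rule sum.group[OF assms(1) _ assms(2)]) simp
  finally show ?thesis .
qed

lemma polytope_extreme_point_minimizer:
  fixes D :: "'a::euclidean_space set"
  assumes "polytope D" "D \<noteq> {}"
  obtains v where "v extreme_point_of D" "\<forall>x\<in>D. inner w v \<le> inner w x"
proof -
  define E where "E = {x. x extreme_point_of D}"
  obtain T where T: "finite T" "D = convex hull T" using assms unfolding polytope_def by blast
  then have DE: "D = convex hull E" unfolding E_def using Krein_Milman_polytope by blast
  have "E \<subseteq> T" unfolding E_def T using extreme_point_of_convex_hull by blast
  then have fin: "finite E" using T finite_subset by blast
  have "E \<noteq> {}" using DE assms by auto
  then obtain v where v: "v \<in> E" "\<forall>y\<in>E. inner w v \<le> inner w y"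
    using arg_min_if_finite[OF fin, of "inner w"] by (metis not_less)
  then have "convex hull E \<subseteq> {x. inner w v \<le> inner w x}"
    by (intro hull_minimal) (auto simp: convex_halfspace_ge)
  then have "\<forall>x\<in>D. inner w v \<le> inner w x" using DE by auto
  with v that show ?thesis unfolding E_def by blast
qed

text \<open>The Delzant condition at the vertex \<open>v\<close> refers to some facet presentation, which may list
  the facets differently from \<open>(m, u, \<phi>)\<close>; the map \<open>\<sigma>\<close> translates the indices.\<close>

lemma delzant_vertex_cone:
  fixes D :: "(real^'n) set"
  assumes dz: "delzant_polytope D" and fp: "facet_presentation D m u \<phi>" and wi: "integral_vec w"
    and v: "v extreme_point_of D" and min: "\<forall>x\<in>D. inner w v \<le> inner w x"
  obtains a :: "nat \<Rightarrow> nat"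
  where "(\<Sum>k<m. of_nat (a k) *\<^sub>R u k) = w" "(\<Sum>k<m. of_nat (a k) * \<phi> k) = - inner w v"
proof -
  obtain m' u' \<phi>' where fp': "facet_presentation D m' u' \<phi>'"
    and lb: "lattice_basis u' {k. k < m' \<and> inner (u' k) v = - \<phi>' k}"
    using dz v unfolding delzant_polytope_def by blast
  define I where "I = {k. k < m' \<and> inner (u' k) v = - \<phi>' k}"
  have I: "finite I" "card I = CARD('n)" "span (u' ` I) = UNIV"
    using lb lattice_basis_span[OF lb] unfolding I_def lattice_basis_def by auto
  obtain c where wc: "w = (\<Sum>k\<in>I. of_int (c k) *\<^sub>R u' k)"
    using lb wi unfolding I_def lattice_basis_def by blast
  have D': "D = {x. \<forall>k<m'. inner (u' k) x \<ge> - \<phi>' k}" by (rule facet_presentation_eq[OF fp'])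
  have "v \<in> D" using v unfolding extreme_point_of_def by blast
  then have c: "of_int (c k) \<ge> (0::real)" if "k \<in> I" for k
    using minimizer_cone_coeff_nonneg[OF _ I_def I(3) _ _ wc that] I(2) min D' by auto
  have "interior D \<noteq> {}" using dz unfolding delzant_polytope_def by blast
  then have "\<forall>k\<in>I. \<exists>j. j < m \<and> u j = u' k \<and> \<phi> j = \<phi>' k"
    using facet_presentations_match[OF _ fp fp'] by (simp add: I_def)
  then obtain \<sigma> where \<sigma>: "\<And>k. k \<in> I \<Longrightarrow> \<sigma> k < m \<and> u (\<sigma> k) = u' k \<and> \<phi> (\<sigma> k) = \<phi>' k"
    by metis
  define a where "a j = nat (\<Sum>k\<in>{k\<in>I. \<sigma> k = j}. c k)" for j
  have group: "(\<Sum>j<m. of_nat (a j) *\<^sub>R f j) = (\<Sum>k\<in>I. of_int (c k) *\<^sub>R f (\<sigma> k))"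
    for f :: "nat \<Rightarrow> 'b::real_vector"
    unfolding a_def using c \<sigma> by (intro sum_group_scaleR_nat[OF I(1)]) auto
  have sum_u: "(\<Sum>j<m. of_nat (a j) *\<^sub>R u j) = w"
    using group[of u] \<sigma> wc by (simp cong: sum.cong)
  have "(\<Sum>j<m. of_nat (a j) * \<phi> j) = (\<Sum>k\<in>I. of_int (c k) * \<phi>' k)"
    using group[of \<phi>] \<sigma> by (simp cong: sum.cong)
  also have "\<dots> = (\<Sum>k\<in>I. - (of_int (c k) * inner (u' k) v))"
    by (rule sum.cong) (auto simp: I_def)
  also have "\<dots> = - inner w v" using wc by (simp add: inner_sum_left sum_negf)
  finally have "(\<Sum>j<m. of_nat (a j) * \<phi> j) = - inner w v" .
  with sum_u that show ?thesis by blast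
qed

definition width_along :: "'a::real_inner set \<Rightarrow> 'a \<Rightarrow> real" where
  "width_along D w = Sup {\<bar>inner w x - inner w y\<bar> | x y. x \<in> D \<and> y \<in> D}"

lemma width_along_eq:
  assumes "v \<in> D" "\<forall>x\<in>D. inner w v \<le> inner w x" "v' \<in> D" "\<forall>x\<in>D. inner w x \<le> inner w v'"
  shows "width_along D w = inner w v' - inner w v"
  unfolding width_along_def
proof (rule cSup_eq_maximum)
  have "inner w v' - inner w v = \<bar>inner w v' - inner w v\<bar>" using assms by auto
  then show "inner w v' - inner w v \<in> {\<bar>inner w x - inner w y\<bar> | x y. x \<in> D \<and> y \<in> D}"
    using assms by blast
qed (use assms in \<open>fastforce simp: abs_le_iff\<close>)

lemma width_along_le:
  assumes "D \<noteq> {}" "\<And>x. x \<in> D \<Longrightarrow> p \<le> inner w x \<and> inner w x \<le> q"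
  shows "width_along D w \<le> q - p"
  unfolding width_along_def
proof (rule cSup_least)
  fix z assume "z \<in> {\<bar>inner w x - inner w y\<bar> | x y. x \<in> D \<and> y \<in> D}"
  then obtain x y where "z = \<bar>inner w x - inner w y\<bar>" "x \<in> D" "y \<in> D" by blast
  then show "z \<le> q - p" using assms(2)[of x] assms(2)[of y] by linarith
qed (use assms(1) in blast)

definition Upsilon_values :: "nat \<Rightarrow> (nat \<Rightarrow> 'a::real_vector) \<Rightarrow> (nat \<Rightarrow> real) \<Rightarrow> real set" where
  "Upsilon_values m u \<phi> = {s. s > 0 \<and> (\<exists>a::nat \<Rightarrow> nat.
      (\<Sum>k<m. of_nat (a k) *\<^sub>R u k) = 0 \<and> s = (\<Sum>k<m. of_nat (a k) * \<phi> k))}"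

lemma width_along_in_Upsilon_values:
  fixes D :: "(real^'n) set"
  assumes dz: "delzant_polytope D" and fp: "facet_presentation D m u \<phi>"
    and w: "integral_vec w" "w \<noteq> 0"
  shows "width_along D w \<in> Upsilon_values m u \<phi>"
proof -
  have pol: "polytope D" and int: "interior D \<noteq> {}" using dz unfolding delzant_polytope_def by auto
  then have "D \<noteq> {}" using interior_subset by blast
  then obtain v v' where v: "v extreme_point_of D" "\<forall>x\<in>D. inner w v \<le> inner w x"
    and v': "v' extreme_point_of D" "\<forall>x\<in>D. inner (- w) v' \<le> inner (- w) x"
    using polytope_extreme_point_minimizer[OF pol] by metis
  have "v \<in> D" "v' \<in> D" using v v' unfolding extreme_point_of_def by auto
  then have width: "width_along D w = inner w v' - inner w v"
    using width_along_eq v(2) v'(2) by simp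
  obtain z where z: "z \<in> interior D" using int by blast
  have "inner w v < inner w z" "- inner w v' < inner (- w) z"
    using inner_gt_in_interior[OF z, where a = w and p = "inner w v"]
      inner_gt_in_interior[OF z, where a = "- w" and p = "- inner w v'"] v(2) v'(2) w(2) by auto
  then have pos: "width_along D w > 0" unfolding width by simp
  have "integral_vec (- w)" using w(1) unfolding integral_vec_def by simp
  then obtain b :: "nat \<Rightarrow> nat"
    where "(\<Sum>k<m. of_nat (b k) *\<^sub>R u k) = - w" "(\<Sum>k<m. of_nat (b k) * \<phi> k) = - inner (- w) v'"
    using delzant_vertex_cone[OF dz fp _ v'] by blast
  moreover obtain a :: "nat \<Rightarrow> nat"
    where "(\<Sum>k<m. of_nat (a k) *\<^sub>R u k) = w" "(\<Sum>k<m. of_nat (a k) * \<phi> k) = - inner w v"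
    using delzant_vertex_cone[OF dz fp w(1) v] by blast
  ultimately have "(\<Sum>k<m. of_nat (a k + b k) *\<^sub>R u k) = 0"
    and "width_along D w = (\<Sum>k<m. of_nat (a k + b k) * \<phi> k)"
    by (simp_all add: width scaleR_add_left distrib_right sum.distrib)
  with pos show ?thesis unfolding Upsilon_values_def by (auto intro!: exI[of _ "\<lambda>k. a k + b k"])
qed

lemma Upsilon_value_bounds_facet_width:
  assumes fp: "facet_presentation D m u \<phi>" and ne: "D \<noteq> {}" and s: "s \<in> Upsilon_values m u \<phi>"
  obtains k where "k < m" "width_along D (u k) \<le> s"
proof -
  obtain a :: "nat \<Rightarrow> nat" where s0: "s > 0" and au: "(\<Sum>k<m. of_nat (a k) *\<^sub>R u k) = 0"
    and sa: "s = (\<Sum>k<m. of_nat (a k) * \<phi> k)" using s unfolding Upsilon_values_def by blast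
  have "\<exists>k<m. a k \<noteq> 0"
  proof (rule ccontr)
    assume "\<not> (\<exists>k<m. a k \<noteq> 0)"
    then have "s = 0" using sa by simp
    then show False using s0 by simp
  qed
  then obtain k where k: "k < m" "a k \<noteq> 0" by blast
  have slack: "inner (u j) x + \<phi> j \<ge> 0" if "x \<in> D" "j < m" for x j
    using that facet_presentation_eq[OF fp] by auto
  have "inner (u k) x + \<phi> k \<le> s" if x: "x \<in> D" for x
  proof -
    have "inner (u k) x + \<phi> k \<le> of_nat (a k) * (inner (u k) x + \<phi> k)"
      using k slack[OF x k(1)] by (simp add: mult_le_cancel_right1)
    also have "\<dots> \<le> (\<Sum>j<m. of_nat (a j) * (inner (u j) x + \<phi> j))"
      by (rule member_le_sum) (use slack[OF x] k in auto)
    also have "\<dots> = inner (\<Sum>j<m. of_nat (a j) *\<^sub>R u j) x + (\<Sum>j<m. of_nat (a j) * \<phi> j)"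
      by (simp add: inner_sum_left distrib_left sum.distrib)
    finally show ?thesis using au sa by simp
  qed
  then have "width_along D (u k) \<le> (s - \<phi> k) - (- \<phi> k)"
    using slack k(1) by (intro width_along_le[OF ne]) force
  then show ?thesis using that k(1) by simp
qed

theorem proposition3p7:
  fixes \<Delta> :: "(real^'n) set" and m :: nat and u :: "nat \<Rightarrow> real^'n" and \<phi> :: "nat \<Rightarrow> real"
  assumes "delzant_polytope \<Delta>"
    and "facet_presentation \<Delta> m u \<phi>"
  shows "Upsilon m u \<phi> = lattice_width \<Delta>"
proof -
  have ne: "\<Delta> \<noteq> {}" using assms(1) interior_subset unfolding delzant_polytope_def by blast
  have "lattice_width \<Delta> = Inf (width_along \<Delta> ` {w. integral_vec w \<and> w \<noteq> 0})"
    by (simp add: lattice_width_def width_along_def)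
  also have "\<dots> = Inf (Upsilon_values m u \<phi>)"
  proof (rule cInf_eq_coinitial_subset)
    have "integral_vec (axis undefined (1::real))" "axis undefined (1::real) \<noteq> 0"
      by (auto simp: integral_vec_def axis_def vec_eq_iff)
    then show "width_along \<Delta> ` {w. integral_vec w \<and> w \<noteq> 0} \<noteq> {}" by blast
    show "width_along \<Delta> ` {w. integral_vec w \<and> w \<noteq> 0} \<subseteq> Upsilon_values m u \<phi>"
      using width_along_in_Upsilon_values[OF assms] by blast
    show "bdd_below (Upsilon_values m u \<phi>)"
      unfolding Upsilon_values_def by (rule bdd_belowI[of _ 0]) auto
    fix s assume "s \<in> Upsilon_values m u \<phi>"
    then obtain k where "k < m" "width_along \<Delta> (u k) \<le> s"
      using Upsilon_value_bounds_facet_width[OF assms(2) ne] by blast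
    moreover have "integral_vec (u k) \<and> u k \<noteq> 0"
      using facet_presentation_primitive[OF assms(2) \<open>k < m\<close>] unfolding primitive_vec_def by blast
    ultimately show "\<exists>w\<in>width_along \<Delta> ` {w. integral_vec w \<and> w \<noteq> 0}. w \<le> s" by blast
  qed
  also have "\<dots> = Upsilon m u \<phi>" by (simp add: Upsilon_def Upsilon_values_def)
  finally show ?thesis by simp
qed

end
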